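(* Let $\mathcal{X}=\{x_1,\dots,x_N\}$, $\Theta=\{\theta_1,\dots,\theta_M\}$, $\mathcal{A}$ finite with $|\mathcal{A}|=K$, utilities $v_D,v_U:\mathcal{X}\times\Theta\times\mathcal{A}\to\mathbb{R}$, beliefs $b_D(\cdot|x)\in\Delta\Theta$ for $x\in\mathcal{X}$, a common prior $\mathbf p^0\in\Delta\mathcal{X}$, and the signal set $\mathcal{S}=\{s_{\{a^1,\dots,a^M\}}:a^l\in\mathcal{A}\}$ with $K^M$ elements. Call a generator $\pi:\mathcal{X}\to\Delta\mathcal{S}$ credible if $\sum_{x\in\mathcal{X}}[v_U(x,\theta_l,a^l)-v_U(x,\theta_l,a^h)]\pi(s_{\{a^1,\dots,a^M\}}|x)\mathbf p^0(x)\ge0$ for all $s_{\{a^1,\dots,a^M\}}\in\mathcal{S}$, $a^h\in\mathcal{A}$, $l\in\{1,\dots,M\}$, and let $$\bar v_D(\pi,\mathbf p^0)=\sum_{x}\mathbf p^0(x)\sum_{s_{\{a^1,\dots,a^M\}}\in\mathcal{S}}\pi(s_{\{a^1,\dots,a^M\}}|x)\sum_{l=1}^M b_D(\theta_l|x)v_D(x,\theta_l,a^l).$$ Call a credible generator optimal if it maximizes $\bar v_D(\cdot,\mathbf p^0)$ over all credible generators, and let $V_D(\mathbf p^0)$ be this maximum. Then the set of optimal generators consists of either exactly one or infinitely many generators, all achieving $V_D(\mathbf p^0)$. Moreover, there exists an optimal generator $\pi^*$ such that, for each state $x\in\mathcal{X}$, $\pi^*(s|x)=0$ for at least $K^M-N$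 signals $s\in\mathcal{S}$.
   Context: This is the benchmark case of a defender–user game: the defender cannot modulate utilities (no utility transfer) and both the defender and every user type hold the same prior $\mathbf p^0$ over the state. A signal $s_{\{a^1,\dots,a^M\}}$ is a security policy prescribing action $a^l$ to type $\theta_l$; credibility means every prescribed action is a best response of that type under the Bayesian posterior. *)

theory Defs
  imports Complex_Main
begin

text \<open>States 'x (the finite set X, N = CARD('x)), user types 'th (M = CARD('th)),
actions 'a (K = CARD('a)). A signal s_{a^1,...,a^M} is an action profile
s :: 'th => 'a prescribing action s theta to type theta; there are K^M of them.\<close>

definition is_dist :: "('b::finite \<Rightarrow> real) \<Rightarrow> bool" where
  "is_dist p \<longleftrightarrow> (\<forall>y. 0 \<le> p y) \<and> (\<Sum>y\<in>UNIV. p y) = 1"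

definition generator :: "('x::finite \<Rightarrow> ('th::finite \<Rightarrow> 'a::finite) \<Rightarrow> real) \<Rightarrow> bool" where
  "generator \<pi> \<longleftrightarrow> (\<forall>x. is_dist (\<pi> x))"

definition credible ::
  "('x::finite \<Rightarrow> 'th::finite \<Rightarrow> 'a::finite \<Rightarrow> real) \<Rightarrow> ('x \<Rightarrow> real)
    \<Rightarrow> ('x \<Rightarrow> ('th \<Rightarrow> 'a) \<Rightarrow> real) \<Rightarrow> bool" where
  "credible vU p0 \<pi> \<longleftrightarrow> generator \<pi> \<and>
     (\<forall>s ah l. (\<Sum>x\<in>UNIV. (vU x l (s l) - vU x l ah) * \<pi> x s * p0 x) \<ge> 0)"

definition vbarD ::
  "('x::finite \<Rightarrow> 'th::finite \<Rightarrow> 'a::finite \<Rightarrow> real) \<Rightarrow> ('x \<Rightarrow> 'th \<Rightarrow> real) \<Rightarrow> ('x \<Rightarrow> real)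
    \<Rightarrow> ('x \<Rightarrow> ('th \<Rightarrow> 'a) \<Rightarrow> real) \<Rightarrow> real" where
  "vbarD vD bD p0 \<pi> = (\<Sum>x\<in>UNIV. p0 x * (\<Sum>s\<in>UNIV. \<pi> x s * (\<Sum>l\<in>UNIV. bD x l * vD x l (s l))))"

definition optimal where
  "optimal vD vU bD p0 \<pi> \<longleftrightarrow> credible vU p0 \<pi> \<and>
     (\<forall>\<pi>'. credible vU p0 \<pi>' \<longrightarrow> vbarD vD bD p0 \<pi>' \<le> vbarD vD bD p0 \<pi>)"

definition VD where
  "VD vD vU bD p0 = (SUP \<pi>\<in>{\<pi>. credible vU p0 \<pi>}. vbarD vD bD p0 \<pi>)"

end

theory Submission
  imports Defs "HOL-Analysis.Analysis"
begin

text \<open>The credible generators form a compact convex polytope (the simplex constraints together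
with linear credibility constraints, each of which involves a single signal column
\<open>\<pi>(\<cdot>, s)\<close>), and \<open>vbarD\<close> is linear on it. Hence an optimal generator exists and the optimal
generators form a convex set, which is a single point or infinite. For sparsity take an optimal
generator using as few signals as possible. If it used more than \<open>N\<close> signals, their columns
would be linearly dependent in \<open>\<real>\<^sup>N\<close>, say \<open>\<Sum>\<^sub>s c\<^sub>s \<pi>(\<cdot>, s) = 0\<close>. Rescaling every column by
\<open>1 + t c\<^sub>s \<ge> 0\<close> preserves all constraints and changes \<open>vbarD\<close> linearly in \<open>t\<close>; choosing the sign of
\<open>t\<close> so that the value does not drop and \<open>|t|\<close> maximal, one signal disappears.\<close>

lemma generator_nonneg: "generator \<pi> \<Longrightarrow> 0 \<le> \<pi> x s"
  by (simp add: generator_def is_dist_def)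

lemma generator_le_one:
  assumes "generator \<pi>"
  shows "\<pi> x s \<le> 1"
proof -
  have "\<pi> x s \<le> (\<Sum>s'\<in>UNIV. \<pi> x s')"
    by (rule member_le_sum) (use assms generator_nonneg in auto)
  also have "\<dots> = 1"
    using assms by (simp add: generator_def is_dist_def)
  finally show ?thesis .
qed

definition obedience_slack ::
  "('x::finite \<Rightarrow> 'th \<Rightarrow> 'a \<Rightarrow> real) \<Rightarrow> ('x \<Rightarrow> real) \<Rightarrow> ('x \<Rightarrow> ('th \<Rightarrow> 'a) \<Rightarrow> real)
    \<Rightarrow> ('th \<Rightarrow> 'a) \<Rightarrow> 'a \<Rightarrow> 'th \<Rightarrow> real" where
  "obedience_slack vU p0 \<pi> s ah l = (\<Sum>x\<in>UNIV. (vU x l (s l) - vU x l ah) * \<pi> x s * p0 x)"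

lemma credible_iff_obedience_slack:
  "credible vU p0 \<pi> \<longleftrightarrow> generator \<pi> \<and> (\<forall>s ah l. 0 \<le> obedience_slack vU p0 \<pi> s ah l)"
  by (simp add: credible_def obedience_slack_def)

lemma obedience_slack_lincomb:
  "obedience_slack vU p0 (\<lambda>x s. a * \<pi>1 x s + b * \<pi>2 x s) s ah l
    = a * obedience_slack vU p0 \<pi>1 s ah l + b * obedience_slack vU p0 \<pi>2 s ah l"
  unfolding obedience_slack_def sum_distrib_left sum.distrib[symmetric]
  by (intro sum.cong) (simp_all add: algebra_simps)

lemma obedience_slack_rescale:
  "obedience_slack vU p0 (\<lambda>x s. f s * \<pi> x s) s ah l = f s * obedience_slack vU p0 \<pi> s ah l"
  by (simp add: obedience_slack_def sum_distrib_left ac_simps)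

subsection \<open>Existence of optimal generators\<close>

lemma continuous_on_apply2 [continuous_intros]:
  "continuous_on S (\<lambda>f :: 'a \<Rightarrow> 'b \<Rightarrow> real. f x y)"
  by (rule continuous_on_product_then_coordinatewise
      [OF continuous_on_product_then_coordinatewise[OF continuous_on_id]])

lemma compact_PiE_UNIV:
  fixes K :: "'b::topological_space set"
  assumes "compact K"
  shows "compact (PiE (UNIV :: 'a set) (\<lambda>_. K))"
  using assms
  unfolding compactin_euclidean_iff[symmetric] euclidean_product_topology[symmetric] compactin_PiE
  by simp

lemma compact_credible:
  fixes vU :: "'x::finite \<Rightarrow> 'th::finite \<Rightarrow> 'a::finite \<Rightarrow> real"
  shows "compact {\<pi>. credible vU p0 \<pi>}"
proof -
  define B :: "('x \<Rightarrow> ('th \<Rightarrow> 'a) \<Rightarrow> real) set"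
    where "B = PiE UNIV (\<lambda>_. PiE UNIV (\<lambda>_. {0..1}))"
  have "compact B"
    unfolding B_def by (intro compact_PiE_UNIV compact_Icc)
  moreover have "closed {\<pi>. credible vU p0 \<pi>}"
  proof -
    have "{\<pi>. credible vU p0 \<pi>} =
        {\<pi>. \<forall>x. (\<Sum>s\<in>UNIV. \<pi> x s) = 1} \<inter> {\<pi>. \<forall>x s. 0 \<le> \<pi> x s} \<inter>
        {\<pi>. \<forall>s ah l. 0 \<le> obedience_slack vU p0 \<pi> s ah l}"
      unfolding credible_iff_obedience_slack generator_def is_dist_def by auto
    also have "closed \<dots>"
      unfolding obedience_slack_def
      by (intro closed_Int closed_Collect_all closed_Collect_eq closed_Collect_le continuous_intros)
    finally show ?thesis .
  qed
  moreover have "{\<pi>. credible vU p0 \<pi>} \<subseteq> B"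
    unfolding B_def credible_def
    by (auto simp: PiE_UNIV_domain generator_nonneg generator_le_one)
  ultimately show ?thesis
    by (metis compact_Int_closed inf.absorb_iff2)
qed

lemma continuous_on_vbarD: "continuous_on S (vbarD vD bD p0)"
  unfolding vbarD_def by (intro continuous_intros)

text \<open>Witness: the single signal recommending to every type its best action under the prior.\<close>

lemma ex_credible:
  fixes vU :: "'x::finite \<Rightarrow> 'th::finite \<Rightarrow> 'a::finite \<Rightarrow> real"
  shows "\<exists>\<pi>. credible vU p0 \<pi>"
proof -
  define gain where "gain l a = (\<Sum>x\<in>UNIV. p0 x * vU x l a)" for l a
  have "\<exists>b. \<forall>a. gain l a \<le> gain l b" for l
    using Max_in[of "range (gain l)"] Max_ge[of "range (gain l)"] by fastforce
  then obtain best where best: "\<And>l a. gain l a \<le> gain l (best l)"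
    by metis
  define \<pi> :: "'x \<Rightarrow> ('th \<Rightarrow> 'a) \<Rightarrow> real" where "\<pi> x s = (if s = best then 1 else 0)" for x s
  have "0 \<le> obedience_slack vU p0 \<pi> s ah l" for s ah l
  proof (cases "s = best")
    case True
    then have "obedience_slack vU p0 \<pi> s ah l = gain l (best l) - gain l ah"
      by (simp add: obedience_slack_def \<pi>_def gain_def sum_subtractf[symmetric] algebra_simps)
    then show ?thesis
      using best[of l ah] by simp
  qed (simp add: obedience_slack_def \<pi>_def)
  moreover have "generator \<pi>"
    by (simp add: generator_def is_dist_def \<pi>_def)
  ultimately show ?thesis
    unfolding credible_iff_obedience_slack by blast
qed

lemma ex_optimal:
  fixes vD vU :: "'x::finite \<Rightarrow> 'th::finite \<Rightarrow> 'a::finite \<Rightarrow> real"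
  shows "\<exists>\<pi>. optimal vD vU bD p0 \<pi>"
proof -
  have "\<exists>\<pi>\<in>{\<pi>. credible vU p0 \<pi>}. \<forall>\<pi>'\<in>{\<pi>. credible vU p0 \<pi>}.
          vbarD vD bD p0 \<pi>' \<le> vbarD vD bD p0 \<pi>"
    by (rule continuous_attains_sup) (use compact_credible ex_credible continuous_on_vbarD in auto)
  then show ?thesis
    unfolding optimal_def by auto
qed

lemma optimal_if_dominates_optimal:
  assumes "optimal vD vU bD p0 \<pi>" "credible vU p0 \<pi>'" "vbarD vD bD p0 \<pi> \<le> vbarD vD bD p0 \<pi>'"
  shows "optimal vD vU bD p0 \<pi>'"
  using assms unfolding optimal_def by force

lemma optimal_imp_vbarD_eq_VD:
  assumes "optimal vD vU bD p0 \<pi>"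
  shows "vbarD vD bD p0 \<pi> = VD vD vU bD p0"
  unfolding VD_def
  by (rule cSup_eq_maximum[symmetric]) (use assms in \<open>auto simp: optimal_def\<close>)

subsection \<open>Convexity\<close>

lemma vbarD_add:
  "vbarD vD bD p0 (\<lambda>x s. \<pi>1 x s + \<pi>2 x s) = vbarD vD bD p0 \<pi>1 + vbarD vD bD p0 \<pi>2"
  by (simp add: vbarD_def algebra_simps sum.distrib)

lemma vbarD_mult: "vbarD vD bD p0 (\<lambda>x s. a * \<pi> x s) = a * vbarD vD bD p0 \<pi>"
  by (simp add: vbarD_def algebra_simps sum_distrib_left)

lemma credible_convex_comb:
  assumes "credible vU p0 \<pi>1" "credible vU p0 \<pi>2" "0 \<le> t" "t \<le> 1"
  shows "credible vU p0 (\<lambda>x s. (1 - t) * \<pi>1 x s + t * \<pi>2 x s)"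
proof -
  have gen: "generator \<pi>1" "generator \<pi>2"
    using assms by (simp_all add: credible_def)
  have "is_dist (\<lambda>s. (1 - t) * \<pi>1 x s + t * \<pi>2 x s)" for x
  proof -
    have "(\<Sum>s\<in>UNIV. (1 - t) * \<pi>1 x s + t * \<pi>2 x s)
        = (1 - t) * (\<Sum>s\<in>UNIV. \<pi>1 x s) + t * (\<Sum>s\<in>UNIV. \<pi>2 x s)"
      by (simp add: sum.distrib sum_distrib_left)
    also have "\<dots> = 1"
      using gen by (simp add: generator_def is_dist_def)
    finally show ?thesis
      using gen assms(3,4) by (simp add: is_dist_def generator_nonneg)
  qed
  moreover have "0 \<le> obedience_slack vU p0 (\<lambda>x s. (1 - t) * \<pi>1 x s + t * \<pi>2 x s) s ah l"
    for s ah l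
    using assms unfolding obedience_slack_lincomb credible_iff_obedience_slack
    by (intro add_nonneg_nonneg mult_nonneg_nonneg) auto
  ultimately show ?thesis
    unfolding credible_iff_obedience_slack generator_def by blast
qed

lemma optimal_unique_or_infinite:
  fixes vD vU :: "'x::finite \<Rightarrow> 'th::finite \<Rightarrow> 'a::finite \<Rightarrow> real"
  shows "(\<exists>!\<pi>. optimal vD vU bD p0 \<pi>) \<or> infinite {\<pi>. optimal vD vU bD p0 \<pi>}"
proof (cases "\<exists>!\<pi>. optimal vD vU bD p0 \<pi>")
  case False
  moreover obtain \<pi>0 where "optimal vD vU bD p0 \<pi>0"
    using ex_optimal by blast
  ultimately obtain \<pi>1 \<pi>2 where opt1: "optimal vD vU bD p0 \<pi>1"
    and opt2: "optimal vD vU bD p0 \<pi>2" and "\<pi>1 \<noteq> \<pi>2"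
    by blast
  then obtain x s where xs: "\<pi>1 x s \<noteq> \<pi>2 x s"
    by (metis ext)
  define seg where "seg t = (\<lambda>x s. (1 - t) * \<pi>1 x s + t * \<pi>2 x s)" for t :: real
  have same_value: "vbarD vD bD p0 \<pi>1 = vbarD vD bD p0 \<pi>2"
    using opt1 opt2 unfolding optimal_def by (meson order_antisym)
  have "seg ` {0..1} \<subseteq> {\<pi>. optimal vD vU bD p0 \<pi>}"
  proof (rule image_subsetI)
    fix t :: real assume "t \<in> {0..1}"
    then have t: "0 \<le> t" "t \<le> 1" by simp_all
    have "credible vU p0 (seg t)"
      unfolding seg_def using opt1 opt2 t by (simp add: credible_convex_comb optimal_def)
    moreover have "vbarD vD bD p0 (seg t) = vbarD vD bD p0 \<pi>1"
      unfolding seg_def vbarD_add vbarD_mult same_value by (simp add: algebra_simps)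
    ultimately show "seg t \<in> {\<pi>. optimal vD vU bD p0 \<pi>}"
      using optimal_if_dominates_optimal[OF opt1] by simp
  qed
  moreover have "inj_on seg {0..1}"
  proof
    fix t t' assume "seg t = seg t'"
    then have "seg t x s = seg t' x s"
      by simp
    then have "(t - t') * (\<pi>2 x s - \<pi>1 x s) = 0"
      unfolding seg_def by (simp add: algebra_simps)
    with xs show "t = t'" by simp
  qed
  moreover have "infinite {0..1::real}"
    by (simp add: infinite_Icc)
  ultimately show ?thesis
    by (meson finite_imageD infinite_super)
qed simp

subsection \<open>Sparse optimal generators\<close>

definition signal_support :: "('x \<Rightarrow> 's \<Rightarrow> real) \<Rightarrow> 's set" where
  "signal_support \<pi> = {s. \<exists>x. \<pi> x s \<noteq> 0}"

lemma card_zero_signals_ge: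
  fixes \<pi> :: "'x \<Rightarrow> 's::finite \<Rightarrow> real"
  shows "CARD('s) - card (signal_support \<pi>) \<le> card {s. \<pi> x s = 0}"
proof -
  have "UNIV - signal_support \<pi> \<subseteq> {s. \<pi> x s = 0}"
    by (auto simp: signal_support_def)
  then have "card (UNIV - signal_support \<pi>) \<le> card {s. \<pi> x s = 0}"
    by (intro card_mono) auto
  then show ?thesis
    by (simp add: card_Diff_subset)
qed

lemma credible_rescale:
  assumes "credible vU p0 \<pi>" "\<And>s. 0 \<le> f s" "\<And>x. (\<Sum>s\<in>UNIV. f s * \<pi> x s) = 1"
  shows "credible vU p0 (\<lambda>x s. f s * \<pi> x s)"
proof -
  have "0 \<le> obedience_slack vU p0 (\<lambda>x s. f s * \<pi> x s) s ah l" for s ah l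
    using assms(1,2) unfolding obedience_slack_rescale credible_iff_obedience_slack
    by (intro mult_nonneg_nonneg) auto
  moreover have "generator (\<lambda>x s. f s * \<pi> x s)"
    using assms generator_nonneg by (simp add: generator_def is_dist_def credible_def)
  ultimately show ?thesis
    unfolding credible_iff_obedience_slack by blast
qed

lemma ex_vanishing_combination:
  fixes w :: "'b \<Rightarrow> real^'n"
  assumes "finite U" "CARD('n) < card U"
  obtains c s0 where "(\<Sum>s\<in>U. c s *\<^sub>R w s) = 0" "s0 \<in> U" "c s0 \<noteq> 0"
proof (cases "inj_on w U")
  case True
  have "dependent (w ` U)"
    using assms True by (intro dependent_biggerset) (simp add: card_image)
  then obtain u v where u: "(\<Sum>v\<in>w ` U. u v *\<^sub>R v) = 0" and v: "v \<in> w ` U" "u v \<noteq> 0"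
    using dependent_finite[of "w ` U"] assms(1) by auto
  have "(\<Sum>s\<in>U. u (w s) *\<^sub>R w s) = 0"
    using u sum.reindex[OF True, of "\<lambda>v. u v *\<^sub>R v"] by simp
  with v that show ?thesis
    by auto
next
  case False
  then obtain a b where ab: "a \<in> U" "b \<in> U" "a \<noteq> b" "w a = w b"
    unfolding inj_on_def by blast
  define c where "c s = (if s = a then 1 else if s = b then -1 else (0::real))" for s
  have "(\<Sum>s\<in>U. c s *\<^sub>R w s) = (\<Sum>s\<in>U. (if s = a then w a else 0) - (if s = b then w b else 0))"
    by (rule sum.cong) (use ab(3) in \<open>auto simp: c_def\<close>)
  also have "\<dots> = 0"
    using assms(1) ab by (simp add: sum_subtractf)
  finally show ?thesis
    using that[of c a] ab(1) by (simp add: c_def)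
qed

lemma ex_vanishing_signal_combination:
  fixes \<pi> :: "'x::finite \<Rightarrow> 's::finite \<Rightarrow> real"
  assumes "CARD('x) < card (signal_support \<pi>)"
  obtains c s0 where "\<And>x. (\<Sum>s\<in>UNIV. c s * \<pi> x s) = 0" "s0 \<in> signal_support \<pi>" "c s0 \<noteq> 0"
    "\<And>s. s \<notin> signal_support \<pi> \<Longrightarrow> c s = 0"
proof -
  define U where "U = signal_support \<pi>"
  obtain c s0 where c: "(\<Sum>s\<in>U. c s *\<^sub>R (\<chi> x. \<pi> x s)) = 0" and s0: "s0 \<in> U" "c s0 \<noteq> 0"
    using ex_vanishing_combination[of U "\<lambda>s. \<chi> x. \<pi> x s"] assms unfolding U_def by auto
  define c' where "c' s = (if s \<in> U then c s else 0)" for s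
  have "(\<Sum>s\<in>UNIV. c' s * \<pi> x s) = 0" for x
  proof -
    have "(\<Sum>s\<in>UNIV. c' s * \<pi> x s) = (\<Sum>s\<in>U. c' s * \<pi> x s)"
      by (rule sum.mono_neutral_right) (auto simp: c'_def)
    also have "\<dots> = (\<Sum>s\<in>U. c s *\<^sub>R (\<chi> x. \<pi> x s)) $ x"
      by (simp add: sum_component c'_def)
    also have "\<dots> = 0"
      using c by simp
    finally show ?thesis .
  qed
  then show ?thesis
    using that[of c' s0] s0 by (auto simp: c'_def U_def)
qed

text \<open>Since this applies to \<open>c\<close> and to \<open>-c\<close>, the sign of a vanishing combination can be chosen
so that the value does not decrease while a negative coefficient remains.\<close>

lemma vanishing_signal_combination_has_negative:
  fixes \<pi> :: "'x \<Rightarrow> 's::finite \<Rightarrow> real"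
  assumes "\<And>x s. 0 \<le> \<pi> x s" "\<And>x. (\<Sum>s\<in>UNIV. c s * \<pi> x s) = 0"
    and "s0 \<in> signal_support \<pi>" "c s0 \<noteq> 0"
  shows "\<exists>s. c s < 0"
proof (rule ccontr)
  assume "\<not> (\<exists>s. c s < 0)"
  then have nonneg: "0 \<le> c s * \<pi> x s" for x s
    using assms(1) by (simp add: not_less)
  obtain x where "\<pi> x s0 \<noteq> 0"
    using assms(3) by (auto simp: signal_support_def)
  moreover have "c s0 * \<pi> x s0 = 0"
    using assms(2)[of x] nonneg sum_nonneg_eq_0_iff[of UNIV "\<lambda>s. c s * \<pi> x s"] by simp
  ultimately show False
    using assms(4) by simp
qed

lemma credible_drop_signal:
  assumes cr: "credible vU p0 \<pi>"
    and van: "\<And>x. (\<Sum>s\<in>UNIV. d s * \<pi> x s) = 0"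
    and gain: "0 \<le> vbarD vD bD p0 (\<lambda>x s. d s * \<pi> x s)"
    and neg: "d s0 < 0"
    and off: "\<And>s. s \<notin> signal_support \<pi> \<Longrightarrow> d s = 0"
  obtains \<pi>' where "credible vU p0 \<pi>'" "signal_support \<pi>' \<subset> signal_support \<pi>"
    "vbarD vD bD p0 \<pi> \<le> vbarD vD bD p0 \<pi>'"
proof -
  have "Min (range d) \<in> range d"
    by (intro Min_in) auto
  then obtain s1 where "d s1 = Min (range d)"
    by (metis imageE)
  then have s1_min: "d s1 \<le> d s" for s
    by simp
  with neg have s1_neg: "d s1 < 0"
    by (meson le_less_trans)
  then have s1_supp: "s1 \<in> signal_support \<pi>"
    using off by force
  \<comment> \<open>the factors \<open>1 + t d s\<close> for the largest \<open>t\<close> keeping them all nonnegative\<close>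
  define f where "f s = 1 - d s / d s1" for s
  have f_nonneg: "0 \<le> f s" for s
    using s1_min[of s] s1_neg by (cases "d s < 0") (simp_all add: f_def divide_le_eq_1)
  have f_sum: "(\<Sum>s\<in>UNIV. f s * \<pi> x s) = 1" for x
  proof -
    have "(\<Sum>s\<in>UNIV. f s * \<pi> x s) = (\<Sum>s\<in>UNIV. \<pi> x s) - (\<Sum>s\<in>UNIV. d s * \<pi> x s) / d s1"
      by (simp add: f_def algebra_simps sum_subtractf sum_divide_distrib)
    also have "\<dots> = 1"
      using cr van by (simp add: credible_def generator_def is_dist_def)
    finally show ?thesis .
  qed
  define \<pi>' where "\<pi>' = (\<lambda>x s. f s * \<pi> x s)"
  have "credible vU p0 \<pi>'"
    unfolding \<pi>'_def using cr f_nonneg f_sum by (rule credible_rescale)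
  moreover have "signal_support \<pi>' \<subset> signal_support \<pi>"
  proof -
    have "f s1 = 0"
      using s1_neg by (simp add: f_def)
    then have "signal_support \<pi>' \<subseteq> signal_support \<pi> - {s1}"
      by (auto simp: signal_support_def \<pi>'_def)
    with s1_supp show ?thesis
      by blast
  qed
  moreover have "vbarD vD bD p0 \<pi> \<le> vbarD vD bD p0 \<pi>'"
  proof -
    have perturbation: "\<pi>' = (\<lambda>x s. \<pi> x s + (- 1 / d s1) * (d s * \<pi> x s))"
      by (intro ext) (simp add: \<pi>'_def f_def algebra_simps)
    have "vbarD vD bD p0 \<pi>' = vbarD vD bD p0 \<pi> + (- 1 / d s1) * vbarD vD bD p0 (\<lambda>x s. d s * \<pi> x s)"
      unfolding perturbation vbarD_add vbarD_mult ..
    moreover have "0 \<le> (- 1 / d s1) * vbarD vD bD p0 (\<lambda>x s. d s * \<pi> x s)"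
      using gain s1_neg by (simp add: divide_nonneg_neg)
    ultimately show ?thesis
      by simp
  qed
  ultimately show ?thesis
    using that by blast
qed

lemma credible_support_reduction:
  fixes vD vU :: "'x::finite \<Rightarrow> 'th::finite \<Rightarrow> 'a::finite \<Rightarrow> real"
  assumes cr: "credible vU p0 \<pi>" and big: "CARD('x) < card (signal_support \<pi>)"
  obtains \<pi>' where "credible vU p0 \<pi>'" "signal_support \<pi>' \<subset> signal_support \<pi>"
    "vbarD vD bD p0 \<pi> \<le> vbarD vD bD p0 \<pi>'"
proof -
  obtain c s0 where van: "\<And>x. (\<Sum>s\<in>UNIV. c s * \<pi> x s) = 0"
    and s0: "s0 \<in> signal_support \<pi>" "c s0 \<noteq> 0"
    and off: "\<And>s. s \<notin> signal_support \<pi> \<Longrightarrow> c s = 0"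
    using ex_vanishing_signal_combination[OF big] by blast
  define \<sigma> :: real where "\<sigma> = (if 0 \<le> vbarD vD bD p0 (\<lambda>x s. c s * \<pi> x s) then 1 else -1)"
  define d where "d s = \<sigma> * c s" for s
  have d_van: "(\<Sum>s\<in>UNIV. d s * \<pi> x s) = 0" for x
    using van[of x] by (simp add: d_def sum_distrib_left[symmetric] mult.assoc)
  have "0 \<le> vbarD vD bD p0 (\<lambda>x s. d s * \<pi> x s)"
    using vbarD_mult[of vD bD p0 \<sigma> "\<lambda>x s. c s * \<pi> x s"] by (simp add: d_def \<sigma>_def mult.assoc)
  moreover have "d s0 \<noteq> 0"
    using s0 by (simp add: d_def \<sigma>_def)
  then obtain s where "d s < 0"
    using vanishing_signal_combination_has_negative[OF _ d_van s0(1)] cr generator_nonneg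
    by (auto simp: credible_def)
  moreover have "d s = 0" if "s \<notin> signal_support \<pi>" for s
    using off[OF that] by (simp add: d_def)
  ultimately show ?thesis
    using credible_drop_signal[OF cr d_van] that by blast
qed

lemma ex_optimal_small_support:
  fixes vD vU :: "'x::finite \<Rightarrow> 'th::finite \<Rightarrow> 'a::finite \<Rightarrow> real"
  shows "\<exists>\<pi>. optimal vD vU bD p0 \<pi> \<and> card (signal_support \<pi>) \<le> CARD('x)"
proof -
  obtain \<pi>0 where "optimal vD vU bD p0 \<pi>0"
    using ex_optimal by blast
  then obtain \<pi> where opt: "optimal vD vU bD p0 \<pi>"
    and least: "\<And>\<pi>'. optimal vD vU bD p0 \<pi>' \<Longrightarrow> card (signal_support \<pi>) \<le> card (signal_support \<pi>')"
    using ex_has_least_nat[of "optimal vD vU bD p0" \<pi>0 "\<lambda>\<pi>. card (signal_support \<pi>)"] by blast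
  have "card (signal_support \<pi>) \<le> CARD('x)"
  proof (rule ccontr)
    assume "\<not> ?thesis"
    moreover have "credible vU p0 \<pi>"
      using opt by (simp add: optimal_def)
    ultimately obtain \<pi>' where cr': "credible vU p0 \<pi>'"
      and smaller: "signal_support \<pi>' \<subset> signal_support \<pi>"
      and better: "vbarD vD bD p0 \<pi> \<le> vbarD vD bD p0 \<pi>'"
      using credible_support_reduction[of vU p0 \<pi> vD bD] by (auto simp: not_le)
    have "card (signal_support \<pi>) \<le> card (signal_support \<pi>')"
      using least optimal_if_dominates_optimal[OF opt cr' better] by blast
    moreover have "card (signal_support \<pi>') < card (signal_support \<pi>)"
      using smaller by (simp add: psubset_card_mono)
    ultimately show False
      by simp
  qed
  with opt show ?thesis
    by blast
qed

theorem proposition5: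
  fixes vD vU :: "'x::finite \<Rightarrow> 'th::finite \<Rightarrow> 'a::finite \<Rightarrow> real"
    and bD :: "'x \<Rightarrow> 'th \<Rightarrow> real"
    and p0 :: "'x \<Rightarrow> real"
  assumes "\<And>x. is_dist (bD x)"
    and "is_dist p0"
  shows "((\<exists>!\<pi>. optimal vD vU bD p0 \<pi>) \<or> infinite {\<pi>. optimal vD vU bD p0 \<pi>})
         \<and> (\<forall>\<pi>. optimal vD vU bD p0 \<pi> \<longrightarrow> vbarD vD bD p0 \<pi> = VD vD vU bD p0)
         \<and> (\<exists>\<pi>. optimal vD vU bD p0 \<pi> \<and>
              (\<forall>x. card {s. \<pi> x s = 0} \<ge> card (UNIV :: ('th \<Rightarrow> 'a) set) - card (UNIV :: 'x set)))"
proof (intro conjI allI impI)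
  show "(\<exists>!\<pi>. optimal vD vU bD p0 \<pi>) \<or> infinite {\<pi>. optimal vD vU bD p0 \<pi>}"
    by (rule optimal_unique_or_infinite)
  show "vbarD vD bD p0 \<pi> = VD vD vU bD p0" if "optimal vD vU bD p0 \<pi>" for \<pi>
    using that by (rule optimal_imp_vbarD_eq_VD)
  obtain \<pi> where "optimal vD vU bD p0 \<pi>" "card (signal_support \<pi>) \<le> CARD('x)"
    using ex_optimal_small_support by blast
  then show "\<exists>\<pi>. optimal vD vU bD p0 \<pi> \<and>
      (\<forall>x. card {s. \<pi> x s = 0} \<ge> card (UNIV :: ('th \<Rightarrow> 'a) set) - card (UNIV :: 'x set))"
    using card_zero_signals_ge[of \<pi>] by (meson diff_le_mono2 order_trans)
qed

end
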